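(* Let $\Delta=[-\frac{\pi}{2},\frac{\pi}{2}]$ and let $f\in H^1_0(\Delta)$. Then $$2\Big(\int_{-\pi/2}^{\pi/2}f(x)\,dx\Big)^2-\pi\int_{-\pi/2}^{\pi/2}\big(f(x)^2-f'(x)^2\big)\,dx\;\geq\;0,$$ and equality holds only when $f=0$. In other words, the bilinear form $\langle\cdot,\cdot\rangle_i$ defined below is positive definite on $H^1_0(\Delta)$.
   Context: $H^1(\Delta)$ denotes the space of absolutely continuous functions $f:\Delta\to\mathbb{R}$ whose (a.e. defined) derivative $f'$ lies in $L_2(\Delta)$. $H^1_0(\Delta)$ is the subspace of those $f\in H^1(\Delta)$ with $f(-\frac{\pi}{2})=f(\frac{\pi}{2})$. For $f,g\in H^1_0(\Delta)$ the bilinear form is $$\langle f,g\rangle_i=\frac{1}{\pi^2}\Big[2\Big(\int_{-\pi/2}^{\pi/2}f\Big)\Big(\int_{-\pi/2}^{\pi/2}g\Big)-\pi\int_{-\pi/2}^{\pi/2}\big(fg-f'g'\big)\Big].$$ *)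

theory Defs
  imports "HOL-Analysis.Analysis"
begin

definition abs_continuous_on :: "real set \<Rightarrow> (real \<Rightarrow> real) \<Rightarrow> bool" where
  "abs_continuous_on S f \<longleftrightarrow>
     (\<forall>\<epsilon>>0. \<exists>\<delta>>0. \<forall>(n::nat) (a::nat \<Rightarrow> real) (b::nat \<Rightarrow> real).
        (\<forall>k<n. a k \<le> b k \<and> {a k..b k} \<subseteq> S) \<and>
        (\<forall>i<n. \<forall>j<n. i \<noteq> j \<longrightarrow> {a i<..<b i} \<inter> {a j<..<b j} = {}) \<and>
        (\<Sum>k<n. b k - a k) < \<delta>
        \<longrightarrow> (\<Sum>k<n. \<bar>f (b k) - f (a k)\<bar>) < \<epsilon>)"

end

theory Submission
  imports Defs
begin

text \<open>
  Write \<open>f = c + g\<close> with \<open>c\<close> the mean value of \<open>f\<close>. Then the quantity in question equals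
  \<open>(\<integral>f)\<^sup>2 + pi (\<integral>g'\<^sup>2 - \<integral>g\<^sup>2)\<close>, so it suffices to show \<open>\<integral>g\<^sup>2 \<le> \<integral>g'\<^sup>2\<close> with equality only for
  \<open>g = 0\<close>. Being periodic with mean zero, \<open>g\<close> has two zeros \<open>z1 < z2\<close> cutting the circle
  \<open>[-pi/2, pi/2]\<close> into two arcs shorter than \<open>pi\<close>. On an arc with midpoint \<open>m\<close> completing the square
  gives \<open>\<integral>(g' + tan(x - m) g)\<^sup>2 = \<integral>g'\<^sup>2 - \<integral>g\<^sup>2 + [tan(x - m) g\<^sup>2]\<close>; the boundary terms vanish at
  the zeros and cancel at \<open>\<plusminus>pi/2\<close> by periodicity. Equality forces \<open>g' + tan(x - m) g = 0\<close>
  almost everywhere, so \<open>g / cos(x - m)\<close> is constant, hence zero. As \<open>f\<close> is only absolutely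
  continuous, these integrations by parts need the fundamental theorem of calculus for
  absolutely continuous functions with an almost-everywhere derivative.
\<close>

definition nonoverlapping_intervals :: "real set \<Rightarrow> nat \<Rightarrow> (nat \<Rightarrow> real) \<Rightarrow> (nat \<Rightarrow> real) \<Rightarrow> bool" where
  "nonoverlapping_intervals S n a b \<longleftrightarrow>
     (\<forall>k<n. a k \<le> b k \<and> {a k..b k} \<subseteq> S) \<and>
     (\<forall>i<n. \<forall>j<n. i \<noteq> j \<longrightarrow> {a i<..<b i} \<inter> {a j<..<b j} = {})"

lemma abs_continuous_on_iff:
  "abs_continuous_on S h \<longleftrightarrow>
     (\<forall>e>0. \<exists>\<delta>>0. \<forall>n a b. nonoverlapping_intervals S n a b \<and> (\<Sum>k<n. b k - a k) < \<delta> \<longrightarrow>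
        (\<Sum>k<n. \<bar>h (b k) - h (a k)\<bar>) < e)"
  unfolding abs_continuous_on_def nonoverlapping_intervals_def conj_assoc ..

lemma abs_continuous_onI:
  assumes "\<And>e. e > 0 \<Longrightarrow> \<exists>\<delta>>0. \<forall>n a b. nonoverlapping_intervals S n a b \<and>
             (\<Sum>k<n. b k - a k) < \<delta> \<longrightarrow> (\<Sum>k<n. \<bar>h (b k) - h (a k)\<bar>) < e"
  shows "abs_continuous_on S h"
  using assms unfolding abs_continuous_on_iff by blast

lemma abs_continuous_onE:
  assumes "abs_continuous_on S h" "e > 0"
  obtains \<delta> where "\<delta> > 0" "\<And>n a b. nonoverlapping_intervals S n a b \<Longrightarrow>
    (\<Sum>k<n. b k - a k) < \<delta> \<Longrightarrow> (\<Sum>k<n. \<bar>h (b k) - h (a k)\<bar>) < e"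
proof -
  obtain \<delta> where "\<delta> > 0" and H: "\<forall>n a b. nonoverlapping_intervals S n a b \<and> (\<Sum>k<n. b k - a k) < \<delta> \<longrightarrow>
      (\<Sum>k<n. \<bar>h (b k) - h (a k)\<bar>) < e"
    using assms unfolding abs_continuous_on_iff by blast
  show ?thesis by (rule that[OF \<open>\<delta> > 0\<close>]) (use H in blast)
qed

lemma nonoverlapping_intervals_mono:
  "nonoverlapping_intervals S n a b \<Longrightarrow> S \<subseteq> T \<Longrightarrow> nonoverlapping_intervals T n a b"
  unfolding nonoverlapping_intervals_def by blast

lemma abs_continuous_on_subset:
  assumes "abs_continuous_on S h" "T \<subseteq> S"
  shows "abs_continuous_on T h"
proof (rule abs_continuous_onI)
  fix e :: real assume "e > 0"
  with assms(1) obtain \<delta> where "\<delta> > 0" and "\<And>n a b. nonoverlapping_intervals S n a b \<Longrightarrow>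
    (\<Sum>k<n. b k - a k) < \<delta> \<Longrightarrow> (\<Sum>k<n. \<bar>h (b k) - h (a k)\<bar>) < e"
    by (rule abs_continuous_onE) blast
  with assms(2) show "\<exists>\<delta>>0. \<forall>n a b. nonoverlapping_intervals T n a b \<and>
      (\<Sum>k<n. b k - a k) < \<delta> \<longrightarrow> (\<Sum>k<n. \<bar>h (b k) - h (a k)\<bar>) < e"
    by (blast dest: nonoverlapping_intervals_mono)
qed

lemma abs_continuous_on_diff_const_iff:
  "abs_continuous_on S (\<lambda>x. h x - c) \<longleftrightarrow> abs_continuous_on S h"
  by (simp add: abs_continuous_on_def)

lemma abs_continuous_on_imp_continuous_on:
  assumes "abs_continuous_on {a..b} h"
  shows "continuous_on {a..b} h"
  unfolding continuous_on_iff
proof (intro ballI allI impI)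
  fix x e :: real assume x: "x \<in> {a..b}" and "e > 0"
  obtain \<delta> where "\<delta> > 0" and H: "\<And>n u v. nonoverlapping_intervals {a..b} n u v \<Longrightarrow>
    (\<Sum>k<n. v k - u k) < \<delta> \<Longrightarrow> (\<Sum>k<n. \<bar>h (v k) - h (u k)\<bar>) < e"
    using assms \<open>e > 0\<close> by (rule abs_continuous_onE) blast
  show "\<exists>d>0. \<forall>y\<in>{a..b}. dist y x < d \<longrightarrow> dist (h y) (h x) < e"
  proof (intro exI conjI ballI impI)
    fix y assume y: "y \<in> {a..b}" and "dist y x < \<delta>"
    have "nonoverlapping_intervals {a..b} 1 (\<lambda>_. min x y) (\<lambda>_. max x y)"
      using x y by (auto simp: nonoverlapping_intervals_def)
    moreover have "max x y - min x y < \<delta>"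
      using \<open>dist y x < \<delta>\<close> by (auto simp: dist_real_def max_def min_def)
    ultimately have "\<bar>h (max x y) - h (min x y)\<bar> < e"
      using H[of 1 "\<lambda>_. min x y" "\<lambda>_. max x y"] by simp
    then show "dist (h y) (h x) < e"
      by (simp add: dist_real_def max_def min_def abs_minus_commute split: if_splits)
  qed fact
qed

lemma nonoverlapping_intervals_endpoints:
  assumes "nonoverlapping_intervals S n a b" "k < n"
  shows "a k \<in> S" "b k \<in> S" "a k \<le> b k"
proof -
  have "a k \<le> b k" "{a k..b k} \<subseteq> S" using assms by (auto simp: nonoverlapping_intervals_def)
  then show "a k \<in> S" "b k \<in> S" "a k \<le> b k" by auto
qed

lemma abs_continuous_on_mult:
  assumes f: "abs_continuous_on {a..b} f" and g: "abs_continuous_on {a..b} g"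
  shows "abs_continuous_on {a..b} (\<lambda>x. f x * g x)"
proof (rule abs_continuous_onI)
  fix e :: real assume "e > 0"
  have "compact (f ` {a..b} \<union> g ` {a..b})"
    using f g by (intro compact_Un compact_continuous_image abs_continuous_on_imp_continuous_on) auto
  then have "bounded (f ` {a..b} \<union> g ` {a..b})" by (rule compact_imp_bounded)
  then obtain M where "M > 0" and M: "\<forall>y \<in> f ` {a..b} \<union> g ` {a..b}. norm y \<le> M"
    unfolding bounded_pos by blast
  have "e / (2 * M) > 0" using \<open>e > 0\<close> \<open>M > 0\<close> by simp
  obtain d1 where "d1 > 0" and H1: "\<And>n u v. nonoverlapping_intervals {a..b} n u v \<Longrightarrow>
    (\<Sum>k<n. v k - u k) < d1 \<Longrightarrow> (\<Sum>k<n. \<bar>f (v k) - f (u k)\<bar>) < e / (2 * M)"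
    using f \<open>e / (2 * M) > 0\<close> by (rule abs_continuous_onE) blast
  obtain d2 where "d2 > 0" and H2: "\<And>n u v. nonoverlapping_intervals {a..b} n u v \<Longrightarrow>
    (\<Sum>k<n. v k - u k) < d2 \<Longrightarrow> (\<Sum>k<n. \<bar>g (v k) - g (u k)\<bar>) < e / (2 * M)"
    using g \<open>e / (2 * M) > 0\<close> by (rule abs_continuous_onE) blast
  show "\<exists>\<delta>>0. \<forall>n u v. nonoverlapping_intervals {a..b} n u v \<and> (\<Sum>k<n. v k - u k) < \<delta> \<longrightarrow>
      (\<Sum>k<n. \<bar>f (v k) * g (v k) - f (u k) * g (u k)\<bar>) < e"
  proof (intro exI[of _ "min d1 d2"] conjI allI impI)
    fix n u v assume A: "nonoverlapping_intervals {a..b} n u v \<and> (\<Sum>k<n. v k - u k) < min d1 d2"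
    have "\<bar>f (v k) * g (v k) - f (u k) * g (u k)\<bar> \<le> M * \<bar>g (v k) - g (u k)\<bar> + M * \<bar>f (v k) - f (u k)\<bar>"
      if "k < n" for k
    proof -
      have "\<bar>f (v k) * g (v k) - f (u k) * g (u k)\<bar>
          = \<bar>f (v k) * (g (v k) - g (u k)) + g (u k) * (f (v k) - f (u k))\<bar>"
        by (simp add: algebra_simps)
      also have "\<dots> \<le> \<bar>f (v k)\<bar> * \<bar>g (v k) - g (u k)\<bar> + \<bar>g (u k)\<bar> * \<bar>f (v k) - f (u k)\<bar>"
        using abs_triangle_ineq[of "f (v k) * (g (v k) - g (u k))" "g (u k) * (f (v k) - f (u k))"]
        by (simp add: abs_mult)
      also have "\<dots> \<le> M * \<bar>g (v k) - g (u k)\<bar> + M * \<bar>f (v k) - f (u k)\<bar>"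
        using nonoverlapping_intervals_endpoints[OF conjunct1[OF A] that] M
        by (intro add_mono mult_right_mono) auto
      finally show ?thesis .
    qed
    then have "(\<Sum>k<n. \<bar>f (v k) * g (v k) - f (u k) * g (u k)\<bar>)
        \<le> (\<Sum>k<n. M * \<bar>g (v k) - g (u k)\<bar> + M * \<bar>f (v k) - f (u k)\<bar>)"
      by (intro sum_mono) auto
    also have "\<dots> = M * (\<Sum>k<n. \<bar>g (v k) - g (u k)\<bar>) + M * (\<Sum>k<n. \<bar>f (v k) - f (u k)\<bar>)"
      by (simp add: sum.distrib sum_distrib_left)
    also have "\<dots> < M * (e / (2 * M)) + M * (e / (2 * M))"
      using H1[of n u v] H2[of n u v] A \<open>M > 0\<close> by (intro add_strict_mono mult_strict_left_mono) auto
    also have "\<dots> = e" using \<open>M > 0\<close> by (simp add: field_simps)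
    finally show "(\<Sum>k<n. \<bar>f (v k) * g (v k) - f (u k) * g (u k)\<bar>) < e" .
  qed (use \<open>d1 > 0\<close> \<open>d2 > 0\<close> in simp)
qed

lemma lipschitz_on_imp_abs_continuous_on:
  assumes "L-lipschitz_on S w"
  shows "abs_continuous_on S w"
proof (rule abs_continuous_onI)
  fix e :: real assume "e > 0"
  have "L \<ge> 0" using assms by (rule lipschitz_on_nonneg)
  show "\<exists>\<delta>>0. \<forall>n a b. nonoverlapping_intervals S n a b \<and> (\<Sum>k<n. b k - a k) < \<delta> \<longrightarrow>
      (\<Sum>k<n. \<bar>w (b k) - w (a k)\<bar>) < e"
  proof (intro exI[of _ "e / (L + 1)"] conjI allI impI)
    fix n a b assume A: "nonoverlapping_intervals S n a b \<and> (\<Sum>k<n. b k - a k) < e / (L + 1)"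
    have "\<bar>w (b k) - w (a k)\<bar> \<le> L * (b k - a k)" if "k < n" for k
      using lipschitz_onD[OF assms, of "b k" "a k"] nonoverlapping_intervals_endpoints[OF conjunct1[OF A] that]
      by (simp add: dist_real_def)
    then have "(\<Sum>k<n. \<bar>w (b k) - w (a k)\<bar>) \<le> (\<Sum>k<n. L * (b k - a k))"
      by (intro sum_mono) auto
    also have "\<dots> = L * (\<Sum>k<n. b k - a k)"
      by (simp add: sum_distrib_left)
    also have "\<dots> \<le> L * (e / (L + 1))" using A \<open>L \<ge> 0\<close> by (intro mult_left_mono) auto
    also have "\<dots> < e" using \<open>e > 0\<close> \<open>L \<ge> 0\<close> by (simp add: field_simps)
    finally show "(\<Sum>k<n. \<bar>w (b k) - w (a k)\<bar>) < e" .
  qed (use \<open>e > 0\<close> \<open>L \<ge> 0\<close> in simp)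
qed

lemma continuous_derivative_imp_abs_continuous_on:
  assumes der: "\<And>x. x \<in> {a..b} \<Longrightarrow> (w has_real_derivative w' x) (at x)"
    and cont: "continuous_on {a..b} w'"
  shows "abs_continuous_on {a..b} w"
proof -
  obtain B where "B > 0" and B: "\<And>x. x \<in> {a..b} \<Longrightarrow> norm (w' x) \<le> B"
    using compact_imp_bounded[OF compact_continuous_image[OF cont]] unfolding bounded_pos by blast
  have "B-lipschitz_on {a..b} w"
  proof (rule lipschitz_onI)
    show "dist (w x) (w y) \<le> B * dist x y" if "x \<in> {a..b}" "y \<in> {a..b}" for x y
      unfolding dist_norm
      by (rule field_differentiable_bound[of "{a..b}" w w' B])
         (use that B der in \<open>auto intro: has_field_derivative_at_within\<close>)
  qed (use \<open>B > 0\<close> in simp)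
  then show ?thesis by (rule lipschitz_on_imp_abs_continuous_on)
qed

lemma tagged_partial_division_real_interval:
  fixes p :: "(real \<times> real set) set"
  assumes "p tagged_partial_division_of S" "(x, K) \<in> p"
  shows "K = {Inf K..Sup K}" "Inf K \<le> x" "x \<le> Sup K" "Inf K \<in> K" "Sup K \<in> K" "K \<subseteq> S"
proof -
  obtain u v where K: "K = {u..v}" and "x \<in> K"
    using tagged_partial_division_ofD(2,4)[OF assms] by (metis cbox_interval)
  then have "u \<le> v" by auto
  with K \<open>x \<in> K\<close> show "K = {Inf K..Sup K}" "Inf K \<le> x" "x \<le> Sup K" "Inf K \<in> K" "Sup K \<in> K"
    by auto
  show "K \<subseteq> S" using tagged_partial_division_ofD(3)[OF assms] .
qed

lemma tagged_partial_division_real_interiors: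
  fixes p :: "(real \<times> real set) set"
  assumes "p tagged_partial_division_of S" "t \<in> p" "t' \<in> p" "t \<noteq> t'"
  shows "{Inf (snd t)<..<Sup (snd t)} \<inter> {Inf (snd t')<..<Sup (snd t')} = {}"
proof -
  have "interior (snd t) \<inter> interior (snd t') = {}"
    using tagged_partial_division_ofD(5)[OF assms(1)] assms(2-4) by (metis prod.collapse)
  then show ?thesis
    using tagged_partial_division_real_interval(1)[OF assms(1), of "fst t" "snd t"]
      tagged_partial_division_real_interval(1)[OF assms(1), of "fst t'" "snd t'"] assms(2,3)
    by (metis interior_atLeastAtMost_real prod.collapse)
qed

lemma tagged_partial_division_real_content:
  fixes p :: "(real \<times> real set) set"
  assumes "p tagged_partial_division_of S" "(x, K) \<in> p"
  shows "measure lborel K = Sup K - Inf K"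
proof -
  note K = tagged_partial_division_real_interval[OF assms]
  have "Inf K \<le> Sup K" using K(2,3) by linarith
  have "measure lborel K = measure lborel {Inf K..Sup K}" using K(1) by (rule arg_cong)
  also have "\<dots> = Sup K - Inf K" using \<open>Inf K \<le> Sup K\<close> by (rule content_real)
  finally show ?thesis .
qed

lemma abs_continuous_on_tagged_partial_division:
  assumes "abs_continuous_on {a..b} h" "e > 0"
  obtains \<delta> where "\<delta> > 0"
    "\<And>p. p tagged_partial_division_of {a..b} \<Longrightarrow> (\<Sum>(x,K)\<in>p. measure lborel K) < \<delta> \<Longrightarrow>
       (\<Sum>(x,K)\<in>p. \<bar>h (Sup K) - h (Inf K)\<bar>) < e"
proof -
  obtain \<delta> where "\<delta> > 0" and H: "\<And>n u v. nonoverlapping_intervals {a..b} n u v \<Longrightarrow>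
    (\<Sum>k<n. v k - u k) < \<delta> \<Longrightarrow> (\<Sum>k<n. \<bar>h (v k) - h (u k)\<bar>) < e"
    using assms by (rule abs_continuous_onE) blast
  show ?thesis
  proof (rule that[OF \<open>\<delta> > 0\<close>])
    fix p assume p: "p tagged_partial_division_of {a..b}" and small: "(\<Sum>(x,K)\<in>p. measure lborel K) < \<delta>"
    obtain \<phi> where \<phi>: "bij_betw \<phi> {..<card p} p"
      using ex_bij_betw_nat_finite[OF tagged_partial_division_ofD(1)[OF p]] lessThan_atLeast0 by metis
    define u v where "u k = Inf (snd (\<phi> k))" and "v k = Sup (snd (\<phi> k))" for k
    have reindex: "(\<Sum>k<card p. F (\<phi> k)) = (\<Sum>t\<in>p. F t)" for F :: "real \<times> real set \<Rightarrow> real"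
      using sum.reindex_bij_betw[OF \<phi>] .
    have \<phi>p: "\<phi> k \<in> p" if "k < card p" for k
      using bij_betw_apply[OF \<phi>] that by simp
    have "nonoverlapping_intervals {a..b} (card p) u v"
      unfolding nonoverlapping_intervals_def
    proof (intro conjI allI impI)
      fix k assume "k < card p"
      then show "u k \<le> v k" "{u k..v k} \<subseteq> {a..b}"
        using tagged_partial_division_real_interval[OF p, of "fst (\<phi> k)" "snd (\<phi> k)"] \<phi>p
        by (auto simp: u_def v_def)
    next
      fix i j assume "i < card p" "j < card p" "i \<noteq> j"
      then have "\<phi> i \<noteq> \<phi> j" using bij_betw_imp_inj_on[OF \<phi>] by (auto simp: inj_on_def)
      then show "{u i<..<v i} \<inter> {u j<..<v j} = {}"
        unfolding u_def v_def
        by (rule tagged_partial_division_real_interiors[OF p \<phi>p[OF \<open>i < card p\<close>] \<phi>p[OF \<open>j < card p\<close>]])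
    qed
    moreover have "(\<Sum>k<card p. v k - u k) = (\<Sum>(x,K)\<in>p. measure lborel K)"
      using reindex[of "\<lambda>t. Sup (snd t) - Inf (snd t)"] tagged_partial_division_real_content[OF p]
      by (auto simp: u_def v_def intro: sum.cong)
    ultimately have "(\<Sum>k<card p. \<bar>h (v k) - h (u k)\<bar>) < e"
      using H small by simp
    then show "(\<Sum>(x,K)\<in>p. \<bar>h (Sup K) - h (Inf K)\<bar>) < e"
      using reindex[of "\<lambda>t. \<bar>h (Sup (snd t)) - h (Inf (snd t))\<bar>"] by (simp add: u_def v_def split_def)
  qed
qed

lemma tagged_partial_division_content_le_measure:
  fixes p :: "('a::euclidean_space \<times> 'a set) set"
  assumes p: "p tagged_partial_division_of S"
    and T: "T \<in> lmeasurable" "\<And>x K. (x, K) \<in> p \<Longrightarrow> K \<subseteq> T"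
  shows "(\<Sum>(x,K)\<in>p. measure lborel K) \<le> measure lebesgue T"
proof -
  have div: "p tagged_division_of \<Union>(snd ` p)"
    using p by (rule tagged_partial_division_of_Union_self)
  have "(\<Sum>(x,K)\<in>p. measure lborel K) = (\<Sum>K\<in>snd ` p. measure lborel K)"
    using div by (rule sum.over_tagged_division_lemma) (simp add: content_eq_0_interior)
  also have "\<dots> = (\<Sum>K\<in>snd ` p. measure lebesgue K)"
    using division_of_tagged_division[OF div] by (intro sum.cong) (auto simp: measure_completion)
  also have "\<dots> = measure lebesgue (\<Union>(snd ` p))"
    using division_of_tagged_division[OF div] by (rule content_division)
  also have "\<dots> \<le> measure lebesgue T"
  proof (rule measure_mono_fmeasurable)
    show "\<Union>(snd ` p) \<subseteq> T" using T(2) by fastforce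
    show "\<Union>(snd ` p) \<in> sets lebesgue"
      using lmeasurable_division[OF division_of_tagged_division[OF div]] by blast
  qed (fact T(1))
  finally show ?thesis .
qed

lemma negligible_outer_open:
  fixes N :: "'a::euclidean_space set"
  assumes "negligible N" "d > 0"
  obtains T where "open T" "N \<subseteq> T" "T \<in> lmeasurable" "measure lebesgue T < d"
proof -
  have "N \<in> sets lebesgue" using assms(1) negligible_iff_null_sets by blast
  then obtain T where T: "open T" "N \<subseteq> T" "(T - N) \<in> lmeasurable" "emeasure lebesgue (T - N) < ennreal d"
    using sets_lebesgue_outer_open assms(2) by blast
  have sd: "negligible (sym_diff (T - N) T)"
    by (rule negligible_subset[OF assms(1)]) auto
  have "T \<in> lmeasurable" using lmeasurable_negligible_symdiff[OF T(3) sd] .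
  moreover have "measure lebesgue T = measure lebesgue (T - N)"
    using measure_negligible_symdiff[OF T(3) sd] .
  moreover have "measure lebesgue (T - N) < d"
    using T(3,4) by (metis Sigma_Algebra.measure_def enn2real_less_iff fmeasurableD2 top.not_eq_extremum)
  ultimately show ?thesis using that[OF T(1) T(2)] by simp
qed

lemma straddle_increment_bound:
  fixes h :: "real \<Rightarrow> real"
  assumes approx: "\<And>y. \<bar>y - x\<bar> < d \<Longrightarrow> \<bar>h y - h x - (y - x) * D\<bar> \<le> \<epsilon> * \<bar>y - x\<bar>"
    and "u \<le> x" "x \<le> v" "\<bar>u - x\<bar> < d" "\<bar>v - x\<bar> < d"
  shows "\<bar>(v - u) * D - (h v - h u)\<bar> \<le> \<epsilon> * (v - u)"
proof -
  have "\<bar>(v - u) * D - (h v - h u)\<bar> = \<bar>(h u - h x - (u - x) * D) - (h v - h x - (v - x) * D)\<bar>"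
    by (simp add: algebra_simps)
  also have "\<dots> \<le> \<epsilon> * \<bar>u - x\<bar> + \<epsilon> * \<bar>v - x\<bar>"
    using approx[of u] approx[of v] assms(4,5) by linarith
  also have "\<dots> = \<epsilon> * (v - u)"
    using assms(2,3) by (simp add: algebra_simps)
  finally show ?thesis .
qed

lemma derivative_gauge:
  fixes h h' :: "real \<Rightarrow> real"
  assumes "open T" "\<And>x. x \<in> S \<Longrightarrow> (h has_real_derivative h' x) (at x)" "\<epsilon> > 0"
  obtains d where "\<And>x. d x > 0" "\<And>x. x \<in> T \<Longrightarrow> ball x (d x) \<subseteq> T"
    "\<And>x y. x \<in> S \<Longrightarrow> \<bar>y - x\<bar> < d x \<Longrightarrow> \<bar>h y - h x - (y - x) * h' x\<bar> \<le> \<epsilon> * \<bar>y - x\<bar>"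
proof -
  have "\<exists>r. r > 0 \<and> (x \<in> T \<longrightarrow> ball x r \<subseteq> T) \<and>
      (x \<in> S \<longrightarrow> (\<forall>y. \<bar>y - x\<bar> < r \<longrightarrow> \<bar>h y - h x - (y - x) * h' x\<bar> \<le> \<epsilon> * \<bar>y - x\<bar>))" for x
  proof -
    obtain r1 where "r1 > 0" "x \<in> T \<longrightarrow> ball x r1 \<subseteq> T"
      using open_contains_ball[of T] assms(1) zero_less_one by blast
    moreover obtain r2 where "r2 > 0"
      "x \<in> S \<longrightarrow> (\<forall>y. \<bar>y - x\<bar> < r2 \<longrightarrow> \<bar>h y - h x - (y - x) * h' x\<bar> \<le> \<epsilon> * \<bar>y - x\<bar>)"
    proof (cases "x \<in> S")
      case True
      then have "(h has_derivative (\<lambda>y. h' x * y)) (at x)"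
        using assms(2) by (simp add: has_field_derivative_def)
      then obtain r where "r > 0"
        "\<forall>y. norm (y - x) < r \<longrightarrow> norm (h y - h x - h' x * (y - x)) \<le> \<epsilon> * norm (y - x)"
        unfolding has_derivative_at_alt using assms(3) by blast
      then show ?thesis using that[of r] by (simp add: mult.commute)
    qed (use that[of 1] in simp)
    ultimately show ?thesis
      by (intro exI[of _ "min r1 r2"]) auto
  qed
  then obtain d where "\<forall>x. d x > 0 \<and> (x \<in> T \<longrightarrow> ball x (d x) \<subseteq> T) \<and>
      (x \<in> S \<longrightarrow> (\<forall>y. \<bar>y - x\<bar> < d x \<longrightarrow> \<bar>h y - h x - (y - x) * h' x\<bar> \<le> \<epsilon> * \<bar>y - x\<bar>))"
    by metis
  then show ?thesis using that by blast
qed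

lemma tagged_partial_division_derivative_sum_bound:
  fixes h h' :: "real \<Rightarrow> real"
  assumes p: "p tagged_partial_division_of S" and fine: "(\<lambda>x. ball x (d x)) fine p"
    and tags: "\<And>x K. (x, K) \<in> p \<Longrightarrow> x \<in> D"
    and approx: "\<And>x y. x \<in> D \<Longrightarrow> \<bar>y - x\<bar> < d x \<Longrightarrow> \<bar>h y - h x - (y - x) * h' x\<bar> \<le> \<epsilon> * \<bar>y - x\<bar>"
  shows "\<bar>\<Sum>(x,K)\<in>p. measure lborel K * h' x - (h (Sup K) - h (Inf K))\<bar> \<le> \<epsilon> * (\<Sum>(x,K)\<in>p. measure lborel K)"
proof -
  have "\<bar>measure lborel K * h' x - (h (Sup K) - h (Inf K))\<bar> \<le> \<epsilon> * measure lborel K" if "(x, K) \<in> p" for x K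
  proof -
    note K = tagged_partial_division_real_interval[OF p that]
    have "Inf K \<in> ball x (d x)" "Sup K \<in> ball x (d x)"
      using fineD[OF fine that] K(4,5) by blast+
    then have "\<bar>(Sup K - Inf K) * h' x - (h (Sup K) - h (Inf K))\<bar> \<le> \<epsilon> * (Sup K - Inf K)"
      by (intro straddle_increment_bound[OF approx[OF tags[OF that]] K(2,3)])
         (auto simp: dist_real_def abs_minus_commute)
    then show ?thesis using tagged_partial_division_real_content[OF p that] by simp
  qed
  then have "\<bar>\<Sum>(x,K)\<in>p. measure lborel K * h' x - (h (Sup K) - h (Inf K))\<bar> \<le> (\<Sum>(x,K)\<in>p. \<epsilon> * measure lborel K)"
    by (intro sum_abs[THEN order_trans] sum_mono) auto
  also have "\<dots> = \<epsilon> * (\<Sum>(x,K)\<in>p. measure lborel K)"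
    by (simp add: sum_distrib_left split_def)
  finally show ?thesis .
qed

lemma fundamental_theorem_of_calculus_abs_continuous:
  fixes h h' :: "real \<Rightarrow> real"
  assumes ab: "a \<le> b" and ac: "abs_continuous_on {a..b} h" and N: "negligible N"
    and der: "\<And>x. x \<in> {a<..<b} - N \<Longrightarrow> (h has_real_derivative h' x) (at x)"
  shows "(h' has_integral (h b - h a)) {a..b}"
proof (cases "a = b")
  case True
  then show ?thesis by auto
next
  case False
  with ab have "a < b" by simp
  define N' where "N' = N \<union> {a, b}"
  have N': "negligible N'" unfolding N'_def using N by (simp add: negligible_Un negligible_finite)
  define k where "k x = (if x \<in> N' then 0 else h' x)" for x
  \<comment> \<open>Tags outside \<open>N'\<close> are handled by differentiability, tags in \<open>N'\<close> by absolute continuity: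
    a fine gauge keeps their intervals inside an open set of small measure around \<open>N'\<close>.\<close>
  have "(k has_integral (h b - h a)) {a..b}"
    unfolding has_integral_factor_content_real
  proof (intro allI impI)
    fix e :: real assume "e > 0"
    then have "e * (b - a) / 2 > 0" "e / 2 > 0" using \<open>a < b\<close> by simp_all
    obtain \<delta> where "\<delta> > 0" and AC: "\<And>p. p tagged_partial_division_of {a..b} \<Longrightarrow>
        (\<Sum>(x,K)\<in>p. measure lborel K) < \<delta> \<Longrightarrow> (\<Sum>(x,K)\<in>p. \<bar>h (Sup K) - h (Inf K)\<bar>) < e * (b - a) / 2"
      by (rule abs_continuous_on_tagged_partial_division[OF ac \<open>e * (b - a) / 2 > 0\<close>]) blast
    obtain T where T: "open T" "N' \<subseteq> T" "T \<in> lmeasurable" "measure lebesgue T < \<delta>"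
      using negligible_outer_open[OF N' \<open>\<delta> > 0\<close>] by blast
    obtain d where d0: "\<And>x. d x > 0" and dT: "\<And>x. x \<in> T \<Longrightarrow> ball x (d x) \<subseteq> T"
      and dh: "\<And>x y. x \<in> {a<..<b} - N' \<Longrightarrow> \<bar>y - x\<bar> < d x \<Longrightarrow>
                 \<bar>h y - h x - (y - x) * h' x\<bar> \<le> e / 2 * \<bar>y - x\<bar>"
      by (rule derivative_gauge[OF T(1) _ \<open>e / 2 > 0\<close>, of "{a<..<b} - N'" h h'])
         (use der in \<open>auto simp: N'_def\<close>)
    show "\<exists>\<gamma>. gauge \<gamma> \<and> (\<forall>p. p tagged_division_of {a..b} \<and> \<gamma> fine p \<longrightarrow>
            norm ((\<Sum>(x,K)\<in>p. measure lborel K *\<^sub>R k x) - (h b - h a)) \<le> e * measure lborel {a..b})"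
    proof (intro exI conjI allI impI)
      show "gauge (\<lambda>x. ball x (d x))" using d0 gauge_ball_dependent by blast
      fix p assume "p tagged_division_of {a..b} \<and> (\<lambda>x. ball x (d x)) fine p"
      then have p: "p tagged_division_of {a..b}" and fine: "(\<lambda>x. ball x (d x)) fine p" by auto
      then have pp: "p tagged_partial_division_of {a..b}" by (simp add: tagged_division_of_def)
      define P where "P = {(x, K) \<in> p. x \<in> N'}"
      have "P \<subseteq> p" "finite p" using p by (auto simp: P_def)
      have PP: "P tagged_partial_division_of {a..b}" and QQ: "p - P tagged_partial_division_of {a..b}"
        using tagged_partial_division_subset[OF pp] \<open>P \<subseteq> p\<close> by auto
      have "(\<Sum>(x,K)\<in>P. measure lborel K *\<^sub>R k x) = 0"
        by (intro sum.neutral) (auto simp: P_def k_def)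
      moreover have "(\<Sum>(x,K)\<in>p - P. measure lborel K *\<^sub>R k x) = (\<Sum>(x,K)\<in>p - P. measure lborel K * h' x)"
        by (intro sum.cong) (auto simp: P_def k_def split: if_splits)
      ultimately have "(\<Sum>(x,K)\<in>p. measure lborel K *\<^sub>R k x) = (\<Sum>(x,K)\<in>p - P. measure lborel K * h' x)"
        using sum.subset_diff[OF \<open>P \<subseteq> p\<close> \<open>finite p\<close>, of "\<lambda>(x,K). measure lborel K *\<^sub>R k x"] by simp
      moreover have "h b - h a = (\<Sum>(x,K)\<in>p - P. h (Sup K) - h (Inf K)) + (\<Sum>(x,K)\<in>P. h (Sup K) - h (Inf K))"
        using additive_tagged_division_1[OF ab p, of h]
          sum.subset_diff[OF \<open>P \<subseteq> p\<close> \<open>finite p\<close>, of "\<lambda>(x,K). h (Sup K) - h (Inf K)"] by simp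
      ultimately have split: "(\<Sum>(x,K)\<in>p. measure lborel K *\<^sub>R k x) - (h b - h a)
          = (\<Sum>(x,K)\<in>p - P. measure lborel K * h' x - (h (Sup K) - h (Inf K)))
            - (\<Sum>(x,K)\<in>P. h (Sup K) - h (Inf K))"
        by (simp add: sum_subtractf split_def)
      have "\<bar>\<Sum>(x,K)\<in>p - P. measure lborel K * h' x - (h (Sup K) - h (Inf K))\<bar>
          \<le> e / 2 * (\<Sum>(x,K)\<in>p - P. measure lborel K)"
      proof (rule tagged_partial_division_derivative_sum_bound[OF QQ _ _ dh])
        show "(\<lambda>x. ball x (d x)) fine (p - P)" using fine by (auto simp: fine_def)
        show "x \<in> {a<..<b} - N'" if "(x, K) \<in> p - P" for x K
          using that tagged_partial_division_ofD(2,3)[OF pp, of x K] by (auto simp: P_def N'_def)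
      qed
      also have "\<dots> \<le> e / 2 * (b - a)"
        using tagged_partial_division_content_le_measure[OF QQ, of "{a..b}"] \<open>e > 0\<close> ab
          tagged_partial_division_ofD(3)[OF QQ] by (auto intro: mult_left_mono)
      finally have good:
        "\<bar>\<Sum>(x,K)\<in>p - P. measure lborel K * h' x - (h (Sup K) - h (Inf K))\<bar> \<le> e / 2 * (b - a)" .
      have "(\<Sum>(x,K)\<in>P. measure lborel K) \<le> measure lebesgue T"
      proof (rule tagged_partial_division_content_le_measure[OF PP T(3)])
        show "K \<subseteq> T" if "(x, K) \<in> P" for x K
          using that fineD[OF fine] dT T(2) by (force simp: P_def)
      qed
      then have "(\<Sum>(x,K)\<in>P. \<bar>h (Sup K) - h (Inf K)\<bar>) < e * (b - a) / 2"
        using AC[OF PP] T(4) by linarith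
      moreover have "\<bar>\<Sum>(x,K)\<in>P. h (Sup K) - h (Inf K)\<bar> \<le> (\<Sum>(x,K)\<in>P. \<bar>h (Sup K) - h (Inf K)\<bar>)"
        unfolding split_def by (rule sum_abs)
      ultimately have bad: "\<bar>\<Sum>(x,K)\<in>P. h (Sup K) - h (Inf K)\<bar> < e * (b - a) / 2"
        by linarith
      show "norm ((\<Sum>(x,K)\<in>p. measure lborel K *\<^sub>R k x) - (h b - h a)) \<le> e * measure lborel {a..b}"
        unfolding split using good bad ab by simp
    qed
  qed
  then show ?thesis
    by (rule has_integral_spike[OF N', rotated]) (auto simp: k_def)
qed

lemma abs_continuous_on_derivative_zero_imp_constant:
  assumes "abs_continuous_on {a..b} u" "negligible N"
    and "\<And>x. x \<in> {a<..<b} - N \<Longrightarrow> (u has_real_derivative 0) (at x)" "y \<in> {a..b}"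
  shows "u y = u a"
proof -
  have "((\<lambda>x. 0) has_integral u y - u a) {a..y}"
  proof (rule fundamental_theorem_of_calculus_abs_continuous)
    show "abs_continuous_on {a..y} u"
      by (rule abs_continuous_on_subset[OF assms(1)]) (use assms(4) in auto)
  qed (use assms in auto)
  then show ?thesis by (simp add: has_integral_0_eq)
qed

lemma has_integral_tan_completed_square:
  fixes g g' :: "real \<Rightarrow> real"
  assumes pq: "p \<le> q" and ac: "abs_continuous_on {p..q} g" and N: "negligible N"
    and der: "\<And>x. x \<in> {p<..<q} - N \<Longrightarrow> (g has_real_derivative g' x) (at x)"
    and int: "(\<lambda>x. (g' x)\<^sup>2) integrable_on {p..q}"
    and cos: "\<And>x. x \<in> {p..q} \<Longrightarrow> cos (x - m) \<noteq> 0"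
  shows "((\<lambda>x. (g' x + tan (x - m) * g x)\<^sup>2) has_integral
           integral {p..q} (\<lambda>x. (g' x)\<^sup>2 - (g x)\<^sup>2) + tan (q - m) * (g q)\<^sup>2 - tan (p - m) * (g p)\<^sup>2) {p..q}"
proof -
  define w where "w x = tan (x - m)" for x
  have wder: "(w has_real_derivative 1 + (w x)\<^sup>2) (at x)" if "x \<in> {p..q}" for x
  proof -
    have "(w has_real_derivative inverse ((cos (x - m))\<^sup>2)) (at x)"
      unfolding w_def[abs_def] using cos[OF that]
      by (auto intro!: derivative_eq_intros DERIV_chain2[OF DERIV_tan])
    then show ?thesis using tan_sec[OF cos[OF that]] by (simp add: w_def power_inverse)
  qed
  have "abs_continuous_on {p..q} w"
    by (rule continuous_derivative_imp_abs_continuous_on[OF wder])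
       (auto simp: w_def intro!: continuous_intros cos)
  then have ach: "abs_continuous_on {p..q} (\<lambda>x. w x * (g x * g x))"
    by (intro abs_continuous_on_mult ac)
  define h' where "h' x = (1 + (w x)\<^sup>2) * (g x)\<^sup>2 + 2 * w x * g x * g' x" for x
  have "((\<lambda>x. w x * (g x * g x)) has_real_derivative h' x) (at x)" if "x \<in> {p<..<q} - N" for x
    using DERIV_mult[OF wder DERIV_mult[OF der der]] that
    by (simp add: h'_def power2_eq_square algebra_simps)
  then have "(h' has_integral w q * (g q)\<^sup>2 - w p * (g p)\<^sup>2) {p..q}"
    using fundamental_theorem_of_calculus_abs_continuous[OF pq ach N] by (simp add: power2_eq_square)
  moreover have "((\<lambda>x. (g' x)\<^sup>2 - (g x)\<^sup>2) has_integral integral {p..q} (\<lambda>x. (g' x)\<^sup>2 - (g x)\<^sup>2)) {p..q}"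
    using abs_continuous_on_imp_continuous_on[OF ac]
    by (intro integrable_integral integrable_diff int integrable_continuous_interval continuous_intros)
  ultimately have "((\<lambda>x. ((g' x)\<^sup>2 - (g x)\<^sup>2) + h' x) has_integral
      integral {p..q} (\<lambda>x. (g' x)\<^sup>2 - (g x)\<^sup>2) + (w q * (g q)\<^sup>2 - w p * (g p)\<^sup>2)) {p..q}"
    by (intro has_integral_add)
  moreover have "((g' x)\<^sup>2 - (g x)\<^sup>2) + h' x = (g' x + tan (x - m) * g x)\<^sup>2" for x
    by (simp add: h'_def w_def power2_eq_square algebra_simps)
  ultimately show ?thesis by (simp add: w_def algebra_simps)
qed

lemma has_integral_0_nonneg_imp_negligible:
  fixes \<phi> :: "real \<Rightarrow> real"
  assumes int: "(\<phi> has_integral 0) S" and nn: "\<And>x. x \<in> S \<Longrightarrow> \<phi> x \<ge> 0"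
  shows "negligible {x\<in>S. \<phi> x \<noteq> 0}"
proof -
  note intl = has_integral_integrable[OF int]
  have af: "\<phi> absolutely_integrable_on S"
    using nn by (intro absolutely_integrable_onI intl integrable_eq[OF intl]) simp
  have "0 = integral S \<phi>" using int by (simp add: integral_unique)
  also have "integral S \<phi> = set_lebesgue_integral lebesgue S \<phi>"
    using af by (intro set_lebesgue_integral_eq_integral(2)[symmetric])
  finally have "set_lebesgue_integral lebesgue S \<phi> = 0" by simp
  moreover have "set_lebesgue_integral lebesgue S \<phi> = 0 \<longleftrightarrow> (AE x in lebesgue. indicator S x *\<^sub>R \<phi> x = 0)"
    unfolding set_lebesgue_integral_def
  proof (rule integral_nonneg_eq_0_iff_AE)
    show "integrable lebesgue (\<lambda>x. indicat_real S x *\<^sub>R \<phi> x)"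
      by (metis af set_integrable_def)
  qed (use nn in \<open>auto simp: indicator_def\<close>)
  ultimately have "AE x in lebesgue. indicator S x *\<^sub>R \<phi> x = 0" by simp
  then obtain M where M: "M \<in> null_sets lebesgue" "{x \<in> space lebesgue. \<not> (indicator S x *\<^sub>R \<phi> x = 0)} \<subseteq> M"
    by (auto simp: eventually_ae_filter)
  have "{x\<in>S. \<phi> x \<noteq> 0} \<subseteq> M" using M(2) by (auto simp: indicator_def)
  moreover have "negligible M" using M(1) negligible_iff_null_sets by blast
  ultimately show ?thesis using negligible_subset by blast
qed

lemma tan_completed_square_integral_0_imp_zero:
  fixes g g' :: "real \<Rightarrow> real"
  assumes pq: "p \<le> q" and ac: "abs_continuous_on {p..q} g" and N: "negligible N"
    and der: "\<And>x. x \<in> {p<..<q} - N \<Longrightarrow> (g has_real_derivative g' x) (at x)"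
    and cos: "\<And>x. x \<in> {p..q} \<Longrightarrow> cos (x - m) \<noteq> 0"
    and zero: "((\<lambda>x. (g' x + tan (x - m) * g x)\<^sup>2) has_integral 0) {p..q}"
    and end_zero: "g p = 0 \<or> g q = 0" and x: "x \<in> {p..q}"
  shows "g x = 0"
proof -
  define Z where "Z = {x \<in> {p..q}. (g' x + tan (x - m) * g x)\<^sup>2 \<noteq> 0}"
  have NZ: "negligible (N \<union> Z)"
    unfolding Z_def using N by (intro negligible_Un has_integral_0_nonneg_imp_negligible[OF zero]) auto
  define v where "v x = inverse (cos (x - m))" for x
  define v' where "v' x = sin (x - m) / (cos (x - m))\<^sup>2" for x
  have vder: "(v has_real_derivative v' x) (at x)" if "x \<in> {p..q}" for x
    unfolding v_def[abs_def] v'_def using cos[OF that]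
    by (auto intro!: derivative_eq_intros simp: power2_eq_square field_simps)
  have "abs_continuous_on {p..q} v"
    by (rule continuous_derivative_imp_abs_continuous_on[OF vder])
       (use cos in \<open>auto simp: v'_def intro!: continuous_intros\<close>)
  then have acu: "abs_continuous_on {p..q} (\<lambda>x. g x * v x)"
    by (intro abs_continuous_on_mult ac)
  \<comment> \<open>\<open>g' + tan(x - m) g = 0\<close> a.e. says exactly that \<open>g / cos(x - m)\<close> has derivative 0 a.e.\<close>
  have u': "((\<lambda>x. g x * v x) has_real_derivative 0) (at y)" if "y \<in> {p<..<q} - (N \<union> Z)" for y
  proof -
    have "y \<in> {p..q}" "y \<notin> Z" using that by auto
    then have "g' y + tan (y - m) * g y = 0" by (simp add: Z_def)
    moreover have "g' y * v y + v' y * g y = (g' y + tan (y - m) * g y) / cos (y - m)"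
      using cos[OF \<open>y \<in> {p..q}\<close>] by (simp add: v_def v'_def tan_def power2_eq_square field_simps)
    ultimately show ?thesis
      using DERIV_mult[OF der vder[OF \<open>y \<in> {p..q}\<close>]] that by simp
  qed
  have const: "g y * v y = g p * v p" if "y \<in> {p..q}" for y
    by (rule abs_continuous_on_derivative_zero_imp_constant[OF acu NZ u' that])
  have "g p * v p = 0"
    using end_zero const[of q] pq by auto
  then have "g x * v x = 0" using const[OF x] by simp
  then show ?thesis using cos[OF x] by (simp add: v_def)
qed

lemma continuous_on_opposite_signs_zero:
  fixes g :: "real \<Rightarrow> real"
  assumes cont: "continuous_on {a..b} g" and "s \<in> {a..b}" "t \<in> {a..b}" and sign: "g s * g t < 0"
  obtains z where "min s t < z" "z < max s t" "g z = 0"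
proof -
  define l u where "l = min s t" and "u = max s t"
  have "continuous_on {l..u} g"
    by (rule continuous_on_subset[OF cont]) (use assms(2,3) in \<open>auto simp: l_def u_def\<close>)
  moreover have "l \<le> u" "g l * g u < 0"
    using sign by (auto simp: l_def u_def min_def max_def mult.commute)
  ultimately obtain z where z: "l \<le> z" "z \<le> u" "g z = 0"
    using IVT'[of g l 0 u] IVT2'[of g u 0 l] by (cases "g l < 0") (auto simp: mult_less_0_iff)
  moreover have "z \<noteq> l" "z \<noteq> u" using \<open>g l * g u < 0\<close> z(3) by auto
  ultimately have "l < z" "z < u" by auto
  then show ?thesis using that z(3) by (simp add: l_def u_def)
qed

lemma zero_mean_periodic_two_zeros:
  fixes g :: "real \<Rightarrow> real"
  assumes cont: "continuous_on {a..b} g" and "a < b" and mean: "(g has_integral 0) {a..b}"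
    and per: "g a = g b"
  obtains z1 z2 where "a \<le> z1" "z1 < z2" "z2 \<le> b" "z2 - z1 < b - a" "g z1 = 0" "g z2 = 0"
proof (cases "\<forall>x\<in>{a..b}. g x = 0")
  case True
  then show ?thesis using that[of a "(a + b) / 2"] \<open>a < b\<close> by auto
next
  case False
  have "box a b \<noteq> {}" using \<open>a < b\<close> by simp
  have "\<exists>s\<in>{a<..<b}. g s > 0"
  proof (rule ccontr)
    assume pos: "\<not> ?thesis"
    have "- g x = 0" if "x \<in> {a..b}" for x
      by (rule has_integral_0_cbox_imp_0[of a b "\<lambda>x. - g x" x])
         (use cont mean \<open>box a b \<noteq> {}\<close> that pos in
           \<open>auto simp: not_less intro: continuous_intros has_integral_neg[where k=0, simplified]\<close>)
    with False show False by simp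
  qed
  then obtain s where s: "s \<in> {a<..<b}" "g s > 0" by blast
  have "\<exists>t\<in>{a<..<b}. g t < 0"
  proof (rule ccontr)
    assume neg: "\<not> ?thesis"
    have "g x = 0" if "x \<in> {a..b}" for x
      by (rule has_integral_0_cbox_imp_0[of a b g x])
         (use cont mean \<open>box a b \<noteq> {}\<close> that neg in \<open>auto simp: not_less\<close>)
    with False show False by simp
  qed
  then obtain t where t: "t \<in> {a<..<b}" "g t < 0" by blast
  have ab: "a \<in> {a..b}" "b \<in> {a..b}" and st: "s \<in> {a..b}" "t \<in> {a..b}"
    using \<open>a < b\<close> s(1) t(1) by auto
  \<comment> \<open>If \<open>g a \<noteq> 0\<close>, take an interior point \<open>c\<close> where \<open>g\<close> has the other sign; as \<open>g b = g a\<close>,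
    \<open>g\<close> changes sign on both \<open>(a, c)\<close> and \<open>(c, b)\<close>.\<close>
  show ?thesis
  proof (cases "g a = 0")
    case True
    have "g s * g t < 0" using s(2) t(2) by (rule mult_pos_neg)
    then obtain z where "min s t < z" "z < max s t" "g z = 0"
      by (rule continuous_on_opposite_signs_zero[OF cont st])
    then show ?thesis using that[of a z] True s(1) t(1) by auto
  next
    case False
    obtain c where c: "c \<in> {a<..<b}" "g a * g c < 0"
    proof (cases "g a > 0")
      case True
      then show ?thesis using that[of t] t by (simp add: mult_pos_neg)
    next
      case False
      then have "g a < 0" using \<open>g a \<noteq> 0\<close> by simp
      then show ?thesis using that[of s] s by (simp add: mult_neg_pos)
    qed
    then have "c \<in> {a..b}" by auto
    have "g c * g b < 0" using c(2) per by (simp add: mult.commute)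
    then obtain z2 where "min c b < z2" "z2 < max c b" "g z2 = 0"
      by (rule continuous_on_opposite_signs_zero[OF cont \<open>c \<in> {a..b}\<close> ab(2)])
    moreover obtain z1 where "min a c < z1" "z1 < max a c" "g z1 = 0"
      using continuous_on_opposite_signs_zero[OF cont ab(1) \<open>c \<in> {a..b}\<close> c(2)] .
    ultimately show ?thesis using that[of z1 z2] c(1) by auto
  qed
qed

lemma wirtinger_inequality_zero_mean_periodic:
  fixes g g' :: "real \<Rightarrow> real"
  assumes ab: "b = a + pi" and ac: "abs_continuous_on {a..b} g" and N: "negligible N"
    and der: "\<And>x. x \<in> {a<..<b} - N \<Longrightarrow> (g has_real_derivative g' x) (at x)"
    and int: "(\<lambda>x. (g' x)\<^sup>2) integrable_on {a..b}"
    and per: "g a = g b" and mean: "(g has_integral 0) {a..b}"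
  shows "integral {a..b} (\<lambda>x. (g' x)\<^sup>2 - (g x)\<^sup>2) \<ge> 0"
    and "integral {a..b} (\<lambda>x. (g' x)\<^sup>2 - (g x)\<^sup>2) = 0 \<Longrightarrow> x \<in> {a..b} \<Longrightarrow> g x = 0"
proof -
  define E where "E p q = integral {p..q} (\<lambda>x. (g' x)\<^sup>2 - (g x)\<^sup>2)" for p q
  define S where "S m x = (g' x + tan (x - m) * g x)\<^sup>2" for m x
  have "a < b" using ab pi_gt_zero by linarith
  have cont: "continuous_on {a..b} g" using ac by (rule abs_continuous_on_imp_continuous_on)
  obtain z1 z2 where z: "a \<le> z1" "z1 < z2" "z2 \<le> b" "z2 - z1 < b - a" "g z1 = 0" "g z2 = 0"
    using zero_mean_periodic_two_zeros[OF cont \<open>a < b\<close> mean per] by blast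
  have piece: "abs_continuous_on {p..q} g" "\<And>x. x \<in> {p<..<q} - N \<Longrightarrow> (g has_real_derivative g' x) (at x)"
    "(\<lambda>x. (g' x)\<^sup>2) integrable_on {p..q}" if "a \<le> p" "q \<le> b" for p q
    using that by (auto intro: abs_continuous_on_subset[OF ac] der integrable_on_subinterval[OF int])
  have square: "(S m has_integral E p q + tan (q - m) * (g q)\<^sup>2 - tan (p - m) * (g p)\<^sup>2) {p..q}"
    if "a \<le> p" "p \<le> q" "q \<le> b" "\<And>x. x \<in> {p..q} \<Longrightarrow> cos (x - m) \<noteq> 0" for p q m
    unfolding S_def E_def using that piece[of p q]
    by (intro has_integral_tan_completed_square[OF _ _ N]) auto
  have vanish: "g x = 0"
    if "a \<le> p" "p \<le> q" "q \<le> b" "\<And>x. x \<in> {p..q} \<Longrightarrow> cos (x - m) \<noteq> 0"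
      "(S m has_integral 0) {p..q}" "g p = 0 \<or> g q = 0" "x \<in> {p..q}" for p q m x
    using that piece[of p q] unfolding S_def
    by (intro tan_completed_square_integral_0_imp_zero[OF _ _ N]) auto
  have cos: "cos t \<noteq> 0" if "- (pi / 2) < t" "t < pi / 2" for t
    using cos_gt_zero_pi[OF that] by simp
  \<comment> \<open>The arc \<open>[z1, z2]\<close> and the wrapped arc \<open>[z2, b] \<union> [a, z1]\<close> are shorter than \<open>pi\<close>, so the tangent
    centred at the midpoint of either arc has no pole on it; \<open>mo - pi\<close> is that midpoint seen from \<open>[a, z1]\<close>.\<close>
  define mi mo where "mi = (z1 + z2) / 2" and "mo = (z1 + z2 + pi) / 2"
  have cos1: "cos (x - (mo - pi)) \<noteq> 0" if "x \<in> {a..z1}" for x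
    using that z ab by (intro cos) (auto simp: mo_def field_simps)
  have cos2: "cos (x - mi) \<noteq> 0" if "x \<in> {z1..z2}" for x
    using that z ab by (intro cos) (auto simp: mi_def field_simps)
  have cos3: "cos (x - mo) \<noteq> 0" if "x \<in> {z2..b}" for x
    using that z ab by (intro cos) (auto simp: mo_def field_simps)
  define V1 V2 V3 where "V1 = E a z1 - tan (a - (mo - pi)) * (g a)\<^sup>2" and "V2 = E z1 z2"
    and "V3 = E z2 b + tan (b - mo) * (g b)\<^sup>2"
  have I1: "(S (mo - pi) has_integral V1) {a..z1}"
    using square[of a z1 "mo - pi", OF _ _ _ cos1] z by (simp add: V1_def)
  have I2: "(S mi has_integral V2) {z1..z2}"
    using square[of z1 z2 mi, OF _ _ _ cos2] z by (simp add: V2_def)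
  have I3: "(S mo has_integral V3) {z2..b}"
    using square[of z2 b mo, OF _ _ _ cos3] z by (simp add: V3_def)
  have wrap: "tan (b - mo) * (g b)\<^sup>2 = tan (a - (mo - pi)) * (g a)\<^sup>2"
    using ab per by (simp add: algebra_simps)
  have intE: "(\<lambda>x. (g' x)\<^sup>2 - (g x)\<^sup>2) integrable_on {a..b}"
    using cont by (intro integrable_diff[OF int] integrable_continuous_interval continuous_intros)
  have "E z1 z2 + E z2 b = E z1 b"
    unfolding E_def using z
    by (intro Henstock_Kurzweil_Integration.integral_combine integrable_on_subinterval[OF intE]) auto
  moreover have "E a z1 + E z1 b = E a b"
    unfolding E_def using z by (intro Henstock_Kurzweil_Integration.integral_combine intE) auto
  ultimately have sum: "E a b = V1 + V2 + V3"
    using wrap by (simp add: V1_def V2_def V3_def)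
  have nonneg: "V1 \<ge> 0" "V2 \<ge> 0" "V3 \<ge> 0"
    using has_integral_nonneg[OF I1] has_integral_nonneg[OF I2] has_integral_nonneg[OF I3]
    by (auto simp: S_def)
  show "E a b \<ge> 0" using sum nonneg by linarith
  assume "E a b = 0" and x: "x \<in> {a..b}"
  then have "V1 = 0" "V2 = 0" "V3 = 0"
    using sum nonneg by linarith+
  then have zero: "(S (mo - pi) has_integral 0) {a..z1}" "(S mi has_integral 0) {z1..z2}"
    "(S mo has_integral 0) {z2..b}"
    using I1 I2 I3 by simp_all
  consider "x \<in> {a..z1}" | "x \<in> {z1..z2}" | "x \<in> {z2..b}" using x by fastforce
  then show "g x = 0"
  proof cases
    case 1
    then show ?thesis using vanish[OF _ _ _ cos1 zero(1)] z by auto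
  next
    case 2
    then show ?thesis using vanish[OF _ _ _ cos2 zero(2)] z by auto
  next
    case 3
    then show ?thesis using vanish[OF _ _ _ cos3 zero(3)] z by auto
  qed
qed

lemma quadratic_form_nonneg_period_pi:
  fixes f f' :: "real \<Rightarrow> real"
  assumes ab: "b = a + pi" and ac: "abs_continuous_on {a..b} f" and N: "negligible N"
    and der: "\<And>x. x \<in> {a<..<b} - N \<Longrightarrow> (f has_real_derivative f' x) (at x)"
    and int: "(\<lambda>x. (f' x)\<^sup>2) integrable_on {a..b}"
    and per: "f a = f b"
  shows "2 * (integral {a..b} f)\<^sup>2 - pi * integral {a..b} (\<lambda>x. (f x)\<^sup>2 - (f' x)\<^sup>2) \<ge> 0"
    and "2 * (integral {a..b} f)\<^sup>2 - pi * integral {a..b} (\<lambda>x. (f x)\<^sup>2 - (f' x)\<^sup>2) = 0 \<Longrightarrow>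
           x \<in> {a..b} \<Longrightarrow> f x = 0"
proof -
  define A where "A = integral {a..b} f"
  define c where "c = A / pi"
  define g where "g x = f x - c" for x
  define W where "W = integral {a..b} (\<lambda>x. (f' x)\<^sup>2 - (g x)\<^sup>2)"
  have cont: "continuous_on {a..b} f" using ac by (rule abs_continuous_on_imp_continuous_on)
  have len: "measure lborel {a..b} = pi" using ab by simp
  have hA: "(f has_integral A) {a..b}"
    unfolding A_def using cont by (intro integrable_integral integrable_continuous_interval)
  have mean: "(g has_integral 0) {a..b}"
    unfolding g_def[abs_def] using has_integral_diff[OF hA has_integral_const_real[of c a b]] len
    by (simp add: c_def)
  have hW: "((\<lambda>x. (f' x)\<^sup>2 - (g x)\<^sup>2) has_integral W) {a..b}"
    unfolding W_def g_def using cont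
    by (intro integrable_integral integrable_diff[OF int] integrable_continuous_interval continuous_intros)
  have "((\<lambda>x. (f x)\<^sup>2 - (f' x)\<^sup>2) has_integral A\<^sup>2 / pi - W) {a..b}"
  proof -
    have "((\<lambda>x. 2 * c * g x + c\<^sup>2 - ((f' x)\<^sup>2 - (g x)\<^sup>2)) has_integral 2 * c * 0 + pi * c\<^sup>2 - W) {a..b}"
      using has_integral_const_real[of "c\<^sup>2" a b] len
      by (intro has_integral_diff has_integral_add has_integral_mult_right mean hW) auto
    moreover have "2 * c * 0 + pi * c\<^sup>2 - W = A\<^sup>2 / pi - W"
      using pi_gt_zero by (simp add: c_def power2_eq_square)
    ultimately show ?thesis by (simp add: g_def power2_eq_square algebra_simps)
  qed
  then have form: "2 * A\<^sup>2 - pi * integral {a..b} (\<lambda>x. (f x)\<^sup>2 - (f' x)\<^sup>2) = A\<^sup>2 + pi * W"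
    using pi_gt_zero by (simp add: integral_unique right_diff_distrib)
  have acg: "abs_continuous_on {a..b} g"
    unfolding g_def using ac by (simp add: abs_continuous_on_diff_const_iff)
  have derg: "(g has_real_derivative f' y) (at y)" if "y \<in> {a<..<b} - N" for y
    using DERIV_diff[OF der[OF that] DERIV_const[of c]] by (simp add: g_def[abs_def])
  have "g a = g b" using per by (simp add: g_def)
  note wirtinger = wirtinger_inequality_zero_mean_periodic[OF ab acg N _ int \<open>g a = g b\<close> mean, folded W_def]
  have "W \<ge> 0" using wirtinger(1) derg by blast
  then have "A\<^sup>2 + pi * W \<ge> 0" by simp
  then show "2 * (integral {a..b} f)\<^sup>2 - pi * integral {a..b} (\<lambda>x. (f x)\<^sup>2 - (f' x)\<^sup>2) \<ge> 0"
    using form unfolding A_def by linarith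
  assume "2 * (integral {a..b} f)\<^sup>2 - pi * integral {a..b} (\<lambda>x. (f x)\<^sup>2 - (f' x)\<^sup>2) = 0"
    and x: "x \<in> {a..b}"
  then have "A\<^sup>2 + pi * W = 0" using form unfolding A_def by linarith
  moreover have "pi * W \<ge> 0" using \<open>W \<ge> 0\<close> by simp
  ultimately have "A\<^sup>2 = 0" "pi * W = 0" using zero_le_power2[of A] by linarith+
  then have "A = 0" "W = 0" by simp_all
  moreover have "g x = 0" using wirtinger(2) derg \<open>W = 0\<close> x by blast
  ultimately show "f x = 0" by (simp add: g_def c_def)
qed

theorem theorem3p2:
  fixes f f' :: "real \<Rightarrow> real"
  assumes ac: "abs_continuous_on {-pi/2..pi/2} f"
    and deriv: "AE x in lborel. x \<in> {-pi/2<..<pi/2} \<longrightarrow> (f has_real_derivative f' x) (at x)"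
    and meas: "set_borel_measurable lborel {-pi/2..pi/2} f'"
    and L2: "set_integrable lborel {-pi/2..pi/2} (\<lambda>x. (f' x)\<^sup>2)"
    and bc: "f (-pi/2) = f (pi/2)"
  shows "2 * (LINT x:{-pi/2..pi/2}|lborel. f x)\<^sup>2
           - pi * (LINT x:{-pi/2..pi/2}|lborel. (f x)\<^sup>2 - (f' x)\<^sup>2) \<ge> 0
       \<and> (2 * (LINT x:{-pi/2..pi/2}|lborel. f x)\<^sup>2
           - pi * (LINT x:{-pi/2..pi/2}|lborel. (f x)\<^sup>2 - (f' x)\<^sup>2) = 0
          \<longrightarrow> (\<forall>x\<in>{-pi/2..pi/2}. f x = 0))"
proof -
  obtain N where N: "negligible N"
    and "{x. \<not> (x \<in> {-pi/2<..<pi/2} \<longrightarrow> (f has_real_derivative f' x) (at x))} \<subseteq> N"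
    using AE_completion[OF deriv] unfolding eventually_ae_filter_negligible by blast
  then have der: "\<And>x. x \<in> {-pi/2<..<pi/2} - N \<Longrightarrow> (f has_real_derivative f' x) (at x)" by blast
  have cont: "continuous_on {-pi/2..pi/2} f" using ac by (rule abs_continuous_on_imp_continuous_on)
  have f: "set_integrable lborel {-pi/2..pi/2} f"
    and f2: "set_integrable lborel {-pi/2..pi/2} (\<lambda>x. (f x)\<^sup>2)"
    unfolding set_integrable_def using cont
    by (intro borel_integrable_compact compact_Icc continuous_intros; assumption)+
  have LINT_eq: "(LINT x:{-pi/2..pi/2}|lborel. f x) = integral {-pi/2..pi/2} f"
    "(LINT x:{-pi/2..pi/2}|lborel. (f x)\<^sup>2 - (f' x)\<^sup>2) = integral {-pi/2..pi/2} (\<lambda>x. (f x)\<^sup>2 - (f' x)\<^sup>2)"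
    by (rule set_borel_integral_eq_integral(2)[OF f],
        rule set_borel_integral_eq_integral(2)[OF set_integral_diff(1)[OF f2 L2]])
  have period: "pi / 2 = - pi / 2 + pi" by simp
  note int = set_borel_integral_eq_integral(1)[OF L2]
  show ?thesis
    unfolding LINT_eq
  proof (intro conjI impI ballI)
    show "2 * (integral {-pi/2..pi/2} f)\<^sup>2 - pi * integral {-pi/2..pi/2} (\<lambda>x. (f x)\<^sup>2 - (f' x)\<^sup>2) \<ge> 0"
      by (rule quadratic_form_nonneg_period_pi(1)[OF period ac N _ int bc]) (rule der)
    show "f x = 0"
      if "2 * (integral {-pi/2..pi/2} f)\<^sup>2 - pi * integral {-pi/2..pi/2} (\<lambda>x. (f x)\<^sup>2 - (f' x)\<^sup>2) = 0"
        and "x \<in> {-pi/2..pi/2}" for x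
      by (rule quadratic_form_nonneg_period_pi(2)[OF period ac N _ int bc that]) (rule der)
  qed
qed

end
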